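(* Let $K$ be a simplicial complex on the vertex set $[m]$, and let $A$ be a subgroup of $\mathbb{Z}_2^m$. Then the fixed point sets satisfy $(\mathbb{R}\mathcal{Z}_K)^A=(\mathbb{R}\mathcal{Z}_K)^{\operatorname{hull}(A)}$.
   Context: $\mathbb{R}\mathcal{Z}_K=\bigcup_{\sigma\in K}\{x\in[-1,1]^m: x_i\in\{\pm1\}\text{ for } i\notin\sigma\}$, with $\mathbb{Z}_2^m=\{\pm1\}^m$ acting by coordinatewise sign change. The coordinate hull $\operatorname{hull}(A)$ is the smallest coordinate subgroup containing $A$: $\operatorname{hull}(A)=\mathbb{Z}_2^I=\{x\in\mathbb{Z}_2^m: x_i=1\text{ for } i\notin I\}$ with $I=\{i\in[m]:\mathrm{proj}_i(A)\neq\{1\}\}$, $\mathrm{proj}_i$ the $i$-th coordinate projection. *)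

theory Defs
  imports Main "HOL.Real"
begin

text \<open>Vertex set [m] is encoded as {..<m} = {0,...,m-1}. Points of [-1,1]^m are
  functions nat => real vanishing outside {..<m}; elements of Z_2^m = {+-1}^m are
  functions nat => real with values +-1 on {..<m} and 1 outside.\<close>

definition cube :: "nat \<Rightarrow> (nat \<Rightarrow> real) set" where
  "cube m = {x. (\<forall>i<m. -1 \<le> x i \<and> x i \<le> 1) \<and> (\<forall>i\<ge>m. x i = 0)}"

definition Z2m :: "nat \<Rightarrow> (nat \<Rightarrow> real) set" where
  "Z2m m = {g. (\<forall>i<m. g i = 1 \<or> g i = -1) \<and> (\<forall>i\<ge>m. g i = 1)}"

definition act :: "(nat \<Rightarrow> real) \<Rightarrow> (nat \<Rightarrow> real) \<Rightarrow> (nat \<Rightarrow> real)" where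
  "act g x = (\<lambda>i. g i * x i)"

definition is_subgroup_Z2m :: "nat \<Rightarrow> (nat \<Rightarrow> real) set \<Rightarrow> bool" where
  "is_subgroup_Z2m m A \<longleftrightarrow> A \<subseteq> Z2m m \<and> (\<lambda>i. 1) \<in> A
     \<and> (\<forall>g\<in>A. \<forall>h\<in>A. (\<lambda>i. g i * h i) \<in> A)
     \<and> (\<forall>g\<in>A. (\<lambda>i. inverse (g i)) \<in> A)"

definition simplicial_complex :: "nat \<Rightarrow> nat set set \<Rightarrow> bool" where
  "simplicial_complex m K \<longleftrightarrow> (\<forall>\<sigma>\<in>K. \<sigma> \<subseteq> {..<m}) \<and> {} \<in> K
     \<and> (\<forall>\<sigma>\<in>K. \<forall>\<tau>. \<tau> \<subseteq> \<sigma> \<longrightarrow> \<tau> \<in> K)"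

definition real_moment_angle :: "nat \<Rightarrow> nat set set \<Rightarrow> (nat \<Rightarrow> real) set" where
  "real_moment_angle m K =
     (\<Union>\<sigma>\<in>K. {x \<in> cube m. \<forall>i<m. i \<notin> \<sigma> \<longrightarrow> x i = 1 \<or> x i = -1})"

definition coord_subgroup :: "nat \<Rightarrow> nat set \<Rightarrow> (nat \<Rightarrow> real) set" where
  "coord_subgroup m I = {g \<in> Z2m m. \<forall>i<m. i \<notin> I \<longrightarrow> g i = 1}"

definition coord_hull :: "nat \<Rightarrow> (nat \<Rightarrow> real) set \<Rightarrow> (nat \<Rightarrow> real) set" where
  "coord_hull m A = coord_subgroup m {i. i < m \<and> (\<lambda>g. g i) ` A \<noteq> {1}}"

definition fixed_points ::
  "(nat \<Rightarrow> real) set \<Rightarrow> (nat \<Rightarrow> real) set \<Rightarrow> (nat \<Rightarrow> real) set" where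
  "fixed_points A X = {x \<in> X. \<forall>g\<in>A. act g x = x}"

end

theory Submission
  imports Defs
begin

text \<open>A sign change g fixes x exactly when x vanishes on the coordinates where g is -1.
  Hence the fixed points of A depend only on the coordinates on which some element of A is
  nontrivial, and these are the same for A and for its coordinate hull. Nothing about the
  real moment-angle complex is used: the identity holds for fixed points in any set.\<close>

lemma act_eq_self_iff: "act g x = x \<longleftrightarrow> (\<forall>i. g i \<noteq> 1 \<longrightarrow> x i = 0)"
proof -
  have "g i * x i = x i \<longleftrightarrow> (g i - 1) * x i = 0" for i
    by (simp add: algebra_simps)
  then show ?thesis
    unfolding act_def fun_eq_iff by auto
qed

lemma fixed_points_antimono: "A \<subseteq> B \<Longrightarrow> fixed_points B X \<subseteq> fixed_points A X"
  unfolding fixed_points_def by blast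

lemma fixed_points_subset_if_support_subset:
  assumes "\<And>h i. h \<in> B \<Longrightarrow> h i \<noteq> 1 \<Longrightarrow> \<exists>g\<in>A. g i \<noteq> 1"
  shows "fixed_points A X \<subseteq> fixed_points B X"
  using assms unfolding fixed_points_def act_eq_self_iff by blast

lemma subset_coord_hull: "A \<subseteq> Z2m m \<Longrightarrow> A \<subseteq> coord_hull m A"
  unfolding coord_hull_def coord_subgroup_def by auto

text \<open>Nonemptiness matters: for A = {} every projection differs from {1}, so the
  coordinate hull of the empty set is all of Z2m m.\<close>

lemma coord_hull_support:
  assumes "A \<noteq> {}" and "h \<in> coord_hull m A" and "h i \<noteq> 1"
  shows "\<exists>g\<in>A. g i \<noteq> 1"
proof -
  have "h \<in> Z2m m" and h_trivial: "\<forall>i<m. (\<lambda>g. g i) ` A = {1} \<longrightarrow> h i = 1"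
    using assms(2) unfolding coord_hull_def coord_subgroup_def by auto
  then have "i < m"
    using assms(3) unfolding Z2m_def by (metis (mono_tags) mem_Collect_eq leI)
  with h_trivial assms(3) have "(\<lambda>g. g i) ` A \<noteq> {1}"
    by blast
  then show ?thesis
    using assms(1) by force
qed

lemma fixed_points_coord_hull:
  assumes "A \<noteq> {}" and "A \<subseteq> Z2m m"
  shows "fixed_points A X = fixed_points (coord_hull m A) X"
proof
  show "fixed_points A X \<subseteq> fixed_points (coord_hull m A) X"
    using coord_hull_support[OF assms(1)] by (rule fixed_points_subset_if_support_subset)
  show "fixed_points (coord_hull m A) X \<subseteq> fixed_points A X"
    using subset_coord_hull[OF assms(2)] by (rule fixed_points_antimono)
qed

theorem lemma3p3:
  fixes m :: nat and K :: "nat set set" and A :: "(nat \<Rightarrow> real) set"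
  assumes "simplicial_complex m K"
    and "is_subgroup_Z2m m A"
  shows "fixed_points A (real_moment_angle m K) = fixed_points (coord_hull m A) (real_moment_angle m K)"
proof (rule fixed_points_coord_hull)
  show "A \<noteq> {}" and "A \<subseteq> Z2m m"
    using assms(2) unfolding is_subgroup_Z2m_def by auto
qed

end
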